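(* Let $\mathcal{O}$ be the ring of integers of $\mathbb{Q}(\sqrt{-11})$ and $X=\frac12(1+\sqrt{-11})$. Let $n\ge0$ and $z=\sum_{j=0}^n\alpha_jX^j\in\mathcal{O}$ with $\alpha_j\in\{-1,0,1\}$. Then there exist $\beta_j\in\{-1,0,1\}$, $0\le j\le n+2$, such that $z+1=\sum_{j=0}^{n+2}\beta_jX^j$. *)

theory Defs
  imports Complex_Main
begin

definition X11 :: complex where
  "X11 = (1 + \<i> * complex_of_real (sqrt 11)) / 2"

end

theory Submission
  imports Defs
begin

text \<open>Since \<open>X\<^sup>2 = X - 3\<close>, a carry of \<open>3k\<close> at position \<open>j\<close> can be pushed to the two next
  positions as \<open>k X\<^bsup>j+1\<^esup> - k X\<^bsup>j+2\<^esup>\<close>. Adding \<open>a + b X\<close> to the lowest digit \<open>x\<close> therefore leaves a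
  digit \<open>d\<close> with \<open>x + a = d + 3k\<close> and a new pending summand \<open>(k + b) + (-k) X\<close> one position
  higher. The invariant that keeps this going is that \<open>a\<close>, \<open>b\<close> and \<open>a + b\<close> are all in
  \<open>{-1, 0, 1}\<close>: the new pair again satisfies it, since its sum is \<open>b\<close> and \<open>k \<noteq> 0\<close> only when
  \<open>x + a = \<plusminus>2\<close>, i.e. \<open>a = sgn k\<close>, so that \<open>b\<close> has the opposite sign. Adding \<open>1 = 1 + 0 X\<close> to an
  expansion of length \<open>n + 1\<close> thus yields one of length \<open>n + 3\<close>.\<close>

lemma X11_squared: "X11\<^sup>2 = X11 - 3"
  by (simp add: X11_def power2_eq_square complex_eq_iff)

lemma sum_lessThan_Suc_power_shift:
  fixes X :: "'a::comm_semiring_1"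
  shows "(\<Sum>j<Suc m. c j * X ^ j) = c 0 + X * (\<Sum>j<m. c (Suc j) * X ^ j)"
  by (simp only: sum.lessThan_Suc_shift) (simp add: sum_distrib_left algebra_simps)

lemma balanced_carry:
  fixes x a b :: int
  assumes "x \<in> {-1, 0, 1}" "a \<in> {-1, 0, 1}" "b \<in> {-1, 0, 1}" "a + b \<in> {-1, 0, 1}"
  obtains d k where "d \<in> {-1, 0, 1}" "k \<in> {-1, 0, 1}" "k + b \<in> {-1, 0, 1}" "x + a = d + 3 * k"
proof -
  consider "x + a = 2" | "x + a = -2" | "x + a \<in> {-1, 0, 1}"
    using assms(1,2) by auto
  then show thesis
  proof cases
    case 1
    then show thesis using assms by (intro that[of "-1" 1]) auto
  next
    case 2
    then show thesis using assms by (intro that[of 1 "-1"]) auto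
  next
    case 3
    then show thesis using assms(3) by (intro that[of "x + a" 0]) auto
  qed
qed

lemma carry_step:
  fixes X :: "'a::comm_ring_1" and x a b d k :: int
  assumes X: "X\<^sup>2 = X - 3" and "x + a = d + 3 * k"
  shows "of_int x + (of_int a + of_int b * X) = of_int d + X * (of_int (k + b) + of_int (- k) * X)"
proof -
  have "of_int x + (of_int a + of_int b * X) = (of_int (x + a) + of_int b * X :: 'a)"
    by (simp add: algebra_simps)
  also have "\<dots> = of_int d + 3 * of_int k + of_int b * X"
    using assms(2) by simp
  also have "\<dots> = of_int d + (X - X\<^sup>2) * of_int k + of_int b * X"
    using X by simp
  also have "\<dots> = of_int d + X * (of_int (k + b) + of_int (- k) * X)"
    by (simp add: algebra_simps power2_eq_square)
  finally show ?thesis .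
qed

lemma balanced_expansion_add:
  fixes X :: "'a::comm_ring_1"
  assumes X: "X\<^sup>2 = X - 3"
    and "\<forall>j<m. \<alpha> j \<in> {-1, 0, 1}" "a \<in> {-1, 0, 1}" "b \<in> {-1, 0, 1}" "a + b \<in> {-1, 0, 1}"
  shows "\<exists>\<beta>. (\<forall>j<m + 2. \<beta> j \<in> {-1, 0, 1::int}) \<and>
    (\<Sum>j<m. of_int (\<alpha> j) * X ^ j) + (of_int a + of_int b * X) = (\<Sum>j<m + 2. of_int (\<beta> j) * X ^ j)"
  using assms(2-)
proof (induction m arbitrary: \<alpha> a b)
  case 0
  then show ?case
    by (intro exI[of _ "\<lambda>j. if j = 0 then a else b"]) (auto simp: numeral_2_eq_2 less_Suc_eq)
next
  case (Suc m)
  obtain d k where d: "d \<in> {-1, 0, 1}" and k: "k \<in> {-1, 0, 1}" "k + b \<in> {-1, 0, 1}"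
    and carry: "\<alpha> 0 + a = d + 3 * k"
    using balanced_carry[of "\<alpha> 0" a b] Suc.prems by auto
  obtain \<beta> where \<beta>: "\<forall>j<m + 2. \<beta> j \<in> {-1, 0, 1::int}"
    and sum_\<beta>: "(\<Sum>j<m. of_int (\<alpha> (Suc j)) * X ^ j) + (of_int (k + b) + of_int (- k) * X)
      = (\<Sum>j<m + 2. of_int (\<beta> j) * X ^ j)"
    using Suc.IH[of "\<lambda>j. \<alpha> (Suc j)" "k + b" "- k"] Suc.prems k by auto
  have "(\<Sum>j<Suc m. of_int (\<alpha> j) * X ^ j) + (of_int a + of_int b * X)
      = of_int (\<alpha> 0) + (of_int a + of_int b * X) + X * (\<Sum>j<m. of_int (\<alpha> (Suc j)) * X ^ j)"
    unfolding sum_lessThan_Suc_power_shift by (simp add: algebra_simps)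
  also have "\<dots> = of_int d + X * ((\<Sum>j<m. of_int (\<alpha> (Suc j)) * X ^ j) + (of_int (k + b) + of_int (- k) * X))"
    by (subst carry_step[OF X carry]) (simp add: algebra_simps)
  also have "\<dots> = of_int d + X * (\<Sum>j<m + 2. of_int (\<beta> j) * X ^ j)"
    by (simp only: sum_\<beta>)
  also have "\<dots> = (\<Sum>j<Suc m + 2. of_int (case_nat d \<beta> j) * X ^ j)"
    by (simp only: add_Suc sum_lessThan_Suc_power_shift) simp
  finally show ?case
    using d \<beta> by (intro exI[of _ "case_nat d \<beta>"]) (auto split: nat.split)
qed

theorem lemma6p7:
  fixes n :: nat and \<alpha> :: "nat \<Rightarrow> int"
  assumes "\<forall>j\<le>n. \<alpha> j \<in> {-1, 0, 1}"
  shows "\<exists>\<beta> :: nat \<Rightarrow> int. (\<forall>j\<le>n+2. \<beta> j \<in> {-1, 0, 1}) \<and>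
           (\<Sum>j\<le>n. of_int (\<alpha> j) * X11 ^ j) + 1 = (\<Sum>j\<le>n+2. of_int (\<beta> j) * X11 ^ j)"
proof -
  have "\<forall>j<Suc n. \<alpha> j \<in> {-1, 0, 1}"
    using assms by (simp add: less_Suc_eq_le)
  from balanced_expansion_add[OF X11_squared this, of 1 0]
  show ?thesis
    by (simp add: lessThan_Suc_atMost less_Suc_eq_le flip: Suc_eq_plus1 add_Suc)
qed

end
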